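(* Suppose Assumption 5 holds. Fix $\sigma,\tilde\sigma\in\Delta X$ and for $\beta\in[0,1]$ let $\sigma_\beta=\beta\sigma+(1-\beta)\tilde\sigma$. Then: (i) if $\theta(\sigma)=\theta(\tilde\sigma)$, then $\theta(\sigma_\beta)=\theta(\sigma)$ for all $\beta\in[0,1]$; (ii) if $\theta(\tilde\sigma)<\theta(\sigma)$, then $\beta\mapsto\theta(\sigma_\beta)$ is weakly increasing on $[0,1]$; (iii) if $\theta(\tilde\sigma)<\theta(\sigma)$, then $\theta(\sigma_{\beta_1})<\theta(\sigma_{\beta_2})$ for all $\beta_1<\beta_2$ in $[0,1]$ with $\theta(\sigma_{\beta_1})\in(0,1)$.
   Context: Setting. $X$ is a finite set of actions, $Y$ a set of consequences, $Q:X\to\Delta Y$ the true consequence function, and $\{Q_\theta:\theta\in\Theta\}$ the agent's models with $\Theta=[0,1]$. Assumptions 1–2 hold: $Y$ is a compact subset of a Euclidean space; there is a Borel probability measure $\nu$ on $Y$ with $Q(\cdot\mid x),Q_\theta(\cdot\mid x)\ll\nu$, densities $q(\cdot\mid x)$, $q_\theta(\cdot\mid x)$; $\theta\mapsto q_\theta(\cdot\mid x)$ is continuous $Q(\cdot\mid x)$-a.s.; and for each $x$ there is $g_x\in L^2(Y,Q(\cdot\mid x))$ with $|\ln(q(y\mid x)/q_\theta(y\mid x))|\le g_x(y)$ for all $\theta$, $Q(\cdot\mid x)$-a.s. KLD: for $\sigma\in\Delta X$ (distributions on $X$), $K(\theta,\sigma)=\sum_x\sigma(x)\int\ln\frac{q(y\mid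 x)}{q_\theta(y\mid x)}q(y\mid x)\nu(dy)$. Assumption 5 (identifiability): (i) for each $\sigma\in\Delta X$, $\theta\mapsto K(\theta,\sigma)$ has a unique minimizer on $[0,1]$, denoted $\theta(\sigma)$; (ii) for each $\sigma$ with $\theta(\sigma)\in(0,1)$, $K(\cdot,\sigma)$ is twice differentiable at $\theta(\sigma)$ and $\frac{\partial^2K(\theta,\sigma)}{\partial\theta^2}\big|_{\theta=\theta(\sigma)}>0$. *)

theory Defs
  imports "HOL-Probability.Probability"
begin

(* Delta X = DeltaX.
   - Consequences Y :: 'y set, 'y a Euclidean space.
   - q x y = q(y|x) (true density),  qt th x y = q_th(y|x) (model density),
     both w.r.t. the Borel probability measure nu on Y.
   - Theta = [0,1]; qt is only constrained for th in {0..1}. *)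

definition DeltaX :: "('x::finite \<Rightarrow> real) set" where
  "DeltaX = {\<sigma>. (\<forall>x. 0 \<le> \<sigma> x) \<and> sum \<sigma> UNIV = 1}"

definition Qm :: "'y measure \<Rightarrow> ('y \<Rightarrow> real) \<Rightarrow> 'y measure" where
  "Qm nu f = density nu (\<lambda>y. ennreal (f y))"

definition is_density :: "'y measure \<Rightarrow> ('y \<Rightarrow> real) \<Rightarrow> bool" where
  "is_density nu f \<longleftrightarrow> f \<in> borel_measurable nu \<and> (\<forall>y\<in>space nu. 0 \<le> f y)
      \<and> (\<integral>\<^sup>+ y. ennreal (f y) \<partial>nu) = 1"

definition assumptions_1_2 ::
  "'y::euclidean_space set \<Rightarrow> 'y measure \<Rightarrow> ('x::finite \<Rightarrow> 'y \<Rightarrow> real)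
     \<Rightarrow> (real \<Rightarrow> 'x \<Rightarrow> 'y \<Rightarrow> real) \<Rightarrow> bool" where
  "assumptions_1_2 Y nu q qt \<longleftrightarrow>
     compact Y \<and> prob_space nu \<and> sets nu = sets (restrict_space borel Y) \<and>
     (\<forall>x. is_density nu (q x)) \<and>
     (\<forall>x. \<forall>th\<in>{0..1}. is_density nu (qt th x)) \<and>
     (\<forall>x. AE y in Qm nu (q x). continuous_on {0..1} (\<lambda>th. qt th x y)) \<and>
     (\<forall>x. \<exists>g. g \<in> borel_measurable nu \<and> integrable (Qm nu (q x)) (\<lambda>y. (g y)\<^sup>2) \<and>
          (AE y in Qm nu (q x). \<forall>th\<in>{0..1}. 0 < qt th x y \<and>
               \<bar>ln (q x y / qt th x y)\<bar> \<le> g y))"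

definition KLD :: "'y measure \<Rightarrow> ('x::finite \<Rightarrow> 'y \<Rightarrow> real)
     \<Rightarrow> (real \<Rightarrow> 'x \<Rightarrow> 'y \<Rightarrow> real) \<Rightarrow> real \<Rightarrow> ('x \<Rightarrow> real) \<Rightarrow> real" where
  "KLD nu q qt th \<sigma> = (\<Sum>x\<in>UNIV. \<sigma> x * (\<integral>y. ln (q x y / qt th x y) * q x y \<partial>nu))"

definition is_KLD_min where
  "is_KLD_min nu q qt \<sigma> t \<longleftrightarrow> t \<in> {0..1} \<and> (\<forall>s\<in>{0..1}. KLD nu q qt t \<sigma> \<le> KLD nu q qt s \<sigma>)"

text \<open>theta(sigma): the (unique, under Assumption 5) minimizer of K(., sigma) on [0,1].\<close>
definition theta_of where
  "theta_of nu q qt \<sigma> = (THE t. is_KLD_min nu q qt \<sigma> t)"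

definition assumption_5 where
  "assumption_5 nu q qt \<longleftrightarrow>
     (\<forall>\<sigma>\<in>DeltaX. \<exists>!t. is_KLD_min nu q qt \<sigma> t) \<and>
     (\<forall>\<sigma>\<in>DeltaX. theta_of nu q qt \<sigma> \<in> {0<..<1} \<longrightarrow>
        (\<exists>D. (\<forall>\<^sub>F t in nhds (theta_of nu q qt \<sigma>). (\<lambda>s. KLD nu q qt s \<sigma>) differentiable at t)
           \<and> (deriv (\<lambda>s. KLD nu q qt s \<sigma>) has_real_derivative D) (at (theta_of nu q qt \<sigma>))
           \<and> D > 0))"

end

theory Submission
  imports Defs
begin

text \<open>Since \<open>K(\<cdot>, \<sigma>\<^sub>\<beta>) = \<beta> K(\<cdot>, \<sigma>) + (1 - \<beta>) K(\<cdot>, \<sigma>')\<close> is affine in \<open>\<beta>\<close>, the set of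
  weights at which a given \<open>t\<close> is the minimizer is an interval. The map \<open>\<beta> \<mapsto> \<theta>(\<sigma>\<^sub>\<beta>)\<close> has a
  closed graph, because \<open>K\<close> is continuous in \<open>\<theta>\<close> by dominated convergence, hence is continuous;
  with interval level sets, the intermediate value theorem makes it monotone. If it took an
  interior value \<open>t\<close> on a nondegenerate interval of weights, then at weights approaching the
  boundary of that interval from outside, the first-order conditions divided by
  \<open>\<theta>(\<sigma>\<^sub>\<beta>) - t\<close> would tend to the positive second derivative of \<open>K\<close> at \<open>t\<close>, which is absurd.\<close>

definition mix :: "(real \<Rightarrow> real) \<Rightarrow> (real \<Rightarrow> real) \<Rightarrow> real \<Rightarrow> real \<Rightarrow> real" where
  "mix f g \<beta> s = \<beta> * f s + (1 - \<beta>) * g s"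

lemma mix_reparametrize:
  assumes "\<beta>' \<noteq> \<gamma>"
  shows "mix f g \<beta> s = mix f g \<gamma> s + (\<beta> - \<gamma>) / (\<beta>' - \<gamma>) * (mix f g \<beta>' s - mix f g \<gamma> s)"
  using assms by (simp add: mix_def field_simps)

lemma affine_nonneg_between:
  fixes a b \<beta>1 \<beta>2 \<beta> :: real
  assumes "0 \<le> a + \<beta>1 * b" "0 \<le> a + \<beta>2 * b" "\<beta>1 \<le> \<beta>" "\<beta> \<le> \<beta>2"
  shows "0 \<le> a + \<beta> * b"
proof (cases "0 \<le> b")
  case True
  then have "\<beta>1 * b \<le> \<beta> * b" using assms(3) by (simp add: mult_right_mono)
  then show ?thesis using assms(1) by linarith
next
  case False
  then have "\<beta>2 * b \<le> \<beta> * b" using assms(4) by (simp add: mult_right_mono_neg)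
  then show ?thesis using assms(2) by linarith
qed

lemma difference_quotient_tendsto:
  fixes u :: "real \<Rightarrow> real"
  assumes "(u has_real_derivative D) (at t)" "u t = 0" "filterlim c (at t) F"
  shows "((\<lambda>x. u (c x) / (c x - t)) \<longlongrightarrow> D) F"
proof -
  have "((\<lambda>y. (u y - u t) / (y - t)) \<longlongrightarrow> D) (at t)"
    using assms(1) by (simp add: has_field_derivative_iff)
  from filterlim_compose[OF this assms(3)] show ?thesis
    using assms(2) by simp
qed

text \<open>The abstract setting: \<open>f = K(\<cdot>, \<sigma>)\<close>, \<open>g = K(\<cdot>, \<sigma>')\<close>, and \<open>m \<beta> = \<theta>(\<sigma>\<^sub>\<beta>)\<close>
  is the unique minimizer on \<open>[0,1]\<close> of \<open>mix f g \<beta> = K(\<cdot>, \<sigma>\<^sub>\<beta>)\<close>.\<close>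

locale mixture_minimizer =
  fixes f g m :: "real \<Rightarrow> real"
  assumes continuous_f: "continuous_on {0..1} f" and continuous_g: "continuous_on {0..1} g"
    and minimizer_in: "\<And>\<beta>. \<beta> \<in> {0..1} \<Longrightarrow> m \<beta> \<in> {0..1}"
    and minimizer_le: "\<And>\<beta> s. \<beta> \<in> {0..1} \<Longrightarrow> s \<in> {0..1} \<Longrightarrow> mix f g \<beta> (m \<beta>) \<le> mix f g \<beta> s"
    and minimizer_unique: "\<And>\<beta> t. \<beta> \<in> {0..1} \<Longrightarrow> t \<in> {0..1} \<Longrightarrow>
           (\<forall>s\<in>{0..1}. mix f g \<beta> t \<le> mix f g \<beta> s) \<Longrightarrow> t = m \<beta>"
    and second_order: "\<And>\<beta>. \<beta> \<in> {0..1} \<Longrightarrow> m \<beta> \<in> {0<..<1} \<Longrightarrow>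
           \<exists>D. (\<forall>\<^sub>F t in nhds (m \<beta>). mix f g \<beta> differentiable at t)
             \<and> (deriv (mix f g \<beta>) has_real_derivative D) (at (m \<beta>)) \<and> D > 0"
begin

lemma minimizer_constant_between:
  assumes "\<beta>1 \<in> {0..1}" "\<beta>2 \<in> {0..1}" "\<beta>1 \<le> \<beta>" "\<beta> \<le> \<beta>2" "m \<beta>1 = t" "m \<beta>2 = t"
  shows "m \<beta> = t"
proof -
  have \<beta>: "\<beta> \<in> {0..1}" and t: "t \<in> {0..1}" using assms minimizer_in by auto
  have "mix f g \<beta> t \<le> mix f g \<beta> s" if s: "s \<in> {0..1}" for s
  proof -
    let ?a = "g s - g t" and ?b = "(f s - g s) - (f t - g t)"
    have gap: "mix f g b s - mix f g b t = ?a + b * ?b" for b by (simp add: mix_def algebra_simps)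
    have "0 \<le> ?a + \<beta>1 * ?b" "0 \<le> ?a + \<beta>2 * ?b"
      using minimizer_le[OF assms(1) s] minimizer_le[OF assms(2) s] gap[of \<beta>1] gap[of \<beta>2]
      unfolding assms(5,6) by linarith+
    then have "0 \<le> ?a + \<beta> * ?b" using affine_nonneg_between assms(3,4) by blast
    then show ?thesis using gap[of \<beta>] by linarith
  qed
  then show ?thesis using minimizer_unique[OF \<beta> t] by simp
qed

lemma continuous_on_minimizer: "continuous_on {0..1} m"
proof (rule continuous_from_closed_graph[of "{0..1}"])
  let ?K = "\<lambda>p::real \<times> real. mix f g (fst p) (snd p)"
  have "continuous_on ({0..1} \<times> {0..1}) (\<lambda>p::real \<times> real. f (snd p))"
    by (rule continuous_on_compose2[OF continuous_f continuous_on_snd]) auto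
  moreover have "continuous_on ({0..1} \<times> {0..1}) (\<lambda>p::real \<times> real. g (snd p))"
    by (rule continuous_on_compose2[OF continuous_g continuous_on_snd]) auto
  ultimately have cont_K: "continuous_on ({0..1} \<times> {0..1}) ?K"
    unfolding mix_def by (intro continuous_intros)
  have graph: "(\<lambda>\<beta>. (\<beta>, m \<beta>)) ` {0..1} =
      ({0..1} \<times> {0..1}) \<inter> (\<Inter>s\<in>{0..1}. ({0..1} \<times> {0..1}) \<inter> (\<lambda>p. mix f g (fst p) s - ?K p) -` {0..})"
    using minimizer_in minimizer_le minimizer_unique by (force simp: image_iff)
  have slice: "closed (({0..1} \<times> {0..1}) \<inter> (\<lambda>p. mix f g (fst p) s - ?K p) -` {0..})" for s :: real
  proof (rule continuous_closed_preimage)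
    have "continuous_on ({0..1} \<times> {0..1}) (\<lambda>p::real \<times> real. mix f g (fst p) s)"
      unfolding mix_def by (intro continuous_intros)
    then show "continuous_on ({0..1} \<times> {0..1}) (\<lambda>p. mix f g (fst p) s - ?K p)"
      by (intro continuous_intros cont_K)
  qed (auto intro: closed_Times)
  show "closed ((\<lambda>\<beta>. (\<beta>, m \<beta>)) ` {0..1})"
    unfolding graph by (intro closed_Int[OF closed_Times closed_INT] ballI slice) auto
qed (use minimizer_in in auto)

lemma mono_on_minimizer:
  assumes "m 0 < m 1"
  shows "mono_on {0..1} m"
proof (rule mono_onI)
  fix r s :: real assume r: "r \<in> {0..1}" and s: "s \<in> {0..1}" and "r \<le> s"
  have cont: "continuous_on {a..b} m" if "a \<in> {0..1}" "b \<in> {0..1}" for a b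
    by (rule continuous_on_subset[OF continuous_on_minimizer]) (use that in auto)
  show "m r \<le> m s"
  proof (rule ccontr)
    assume "\<not> m r \<le> m s"
    define c where "c = (m r + m s) / 2"
    have c: "m s < c" "c < m r" using \<open>\<not> m r \<le> m s\<close> by (auto simp: c_def)
    obtain z where z: "r \<le> z" "z \<le> s" "m z = c"
      using IVT2'[of m s c r, OF _ _ \<open>r \<le> s\<close> cont[OF r s]] c by auto
    show False
    proof (cases "m 0 \<le> c")
      case True
      then obtain z' where "0 \<le> z'" "z' \<le> r" "m z' = c"
        using IVT'[of m 0 c r, OF _ _ _ cont[of 0 r]] c r by auto
      then have "m r = c" using minimizer_constant_between[of z' z] z r s by auto
      then show False using c by simp
    next
      case False
      then obtain z' where "s \<le> z'" "z' \<le> 1" "m z' = c"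
        using IVT'[of m s c 1, OF _ _ _ cont[of s 1]] c s assms by auto
      then have "m s = c" using minimizer_constant_between[of z z'] z r s by auto
      then show False using c by simp
    qed
  qed
qed

lemma deriv_at_interior_minimizer:
  assumes "\<beta> \<in> {0..1}" "m \<beta> \<in> {0<..<1}" "(mix f g \<beta> has_real_derivative l) (at (m \<beta>))"
  shows "l = 0"
proof (rule DERIV_local_min[OF assms(3)])
  show "0 < min (m \<beta>) (1 - m \<beta>)" using assms(2) by auto
  show "\<forall>y. \<bar>m \<beta> - y\<bar> < min (m \<beta>) (1 - m \<beta>) \<longrightarrow> mix f g \<beta> (m \<beta>) \<le> mix f g \<beta> y"
    using minimizer_le[OF assms(1)] by (auto simp: abs_if split: if_splits)
qed

lemma first_order_condition_reparametrized:
  assumes "\<beta> \<in> {0..1}" "m \<beta> \<in> {0<..<1}" "\<beta>' \<noteq> \<gamma>"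
    and "(mix f g \<gamma> has_real_derivative u) (at (m \<beta>))"
    and "(mix f g \<beta>' has_real_derivative v) (at (m \<beta>))"
  shows "u + (\<beta> - \<gamma>) / (\<beta>' - \<gamma>) * (v - u) = 0"
proof -
  have "(mix f g \<beta> has_real_derivative u + (\<beta> - \<gamma>) / (\<beta>' - \<gamma>) * (v - u)) (at (m \<beta>))"
    unfolding mix_reparametrize[OF assms(3), of _ _ \<beta>, abs_def]
    by (intro DERIV_add DERIV_cmult DERIV_diff assms(4,5))
  then show ?thesis using deriv_at_interior_minimizer assms(1,2) by blast
qed

text \<open>The second-order condition forbids the minimizer from leaving an interior value \<open>t\<close>
  as the weight moves away from a point \<open>\<gamma>\<close> of the level set: the first-order
  conditions at \<open>m \<beta>\<close>, divided by \<open>m \<beta> - t\<close>, tend to the positive curvature at \<open>\<gamma>\<close>.\<close>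

lemma level_set_not_approached:
  assumes \<gamma>: "\<gamma> \<in> {0..1}" "m \<gamma> = t" and t: "t \<in> {0<..<1}"
    and \<beta>': "\<beta>' \<in> {0..1}" "\<beta>' \<noteq> \<gamma>" "m \<beta>' = t"
    and F: "F \<noteq> bot" "((\<lambda>\<beta>. \<beta>) \<longlongrightarrow> \<gamma>) F" "filterlim m (at t) F" "\<forall>\<^sub>F \<beta> in F. \<beta> \<in> {0..1}"
  shows False
proof -
  obtain D where D: "\<forall>\<^sub>F s in nhds t. mix f g \<gamma> differentiable at s"
      "(deriv (mix f g \<gamma>) has_real_derivative D) (at t)" "D > 0"
    using second_order[OF \<gamma>(1)] \<gamma>(2) t by auto
  obtain D' where D': "\<forall>\<^sub>F s in nhds t. mix f g \<beta>' differentiable at s"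
      "(deriv (mix f g \<beta>') has_real_derivative D') (at t)"
    using second_order[OF \<beta>'(1)] \<beta>'(3) t by auto
  have m_lim: "(m \<longlongrightarrow> t) F" and m_ne: "\<forall>\<^sub>F \<beta> in F. m \<beta> \<noteq> t"
    using F(3) by (auto simp: filterlim_at)
  define u where "u = deriv (mix f g \<gamma>)"
  define v where "v = deriv (mix f g \<beta>')"
  define w where "w \<beta> = (\<beta> - \<gamma>) / (\<beta>' - \<gamma>)" for \<beta>
  have u: "(mix f g \<gamma> has_real_derivative u s) (at s)" and v: "(mix f g \<beta>' has_real_derivative v s) (at s)"
    if "mix f g \<gamma> differentiable at s" "mix f g \<beta>' differentiable at s" for s
    using that by (simp_all add: u_def v_def DERIV_deriv_iff_real_differentiable)
  have "u t = 0" "v t = 0"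
    using deriv_at_interior_minimizer[OF \<gamma>(1)] deriv_at_interior_minimizer[OF \<beta>'(1)]
      u v eventually_nhds_x_imp_x[OF D(1)] eventually_nhds_x_imp_x[OF D'(1)] \<gamma>(2) \<beta>'(3) t
    by auto
  then have U: "((\<lambda>\<beta>. u (m \<beta>) / (m \<beta> - t)) \<longlongrightarrow> D) F"
    and V: "((\<lambda>\<beta>. v (m \<beta>) / (m \<beta> - t)) \<longlongrightarrow> D') F"
    using difference_quotient_tendsto F(3) D(2) D'(2) by (auto simp: u_def v_def)
  have w: "(w \<longlongrightarrow> (\<gamma> - \<gamma>) / (\<beta>' - \<gamma>)) F"
    unfolding w_def[abs_def] by (intro tendsto_intros F(2)) (use \<beta>'(2) in simp)
  have "((\<lambda>\<beta>. u (m \<beta>) / (m \<beta> - t) + w \<beta> * (v (m \<beta>) / (m \<beta> - t) - u (m \<beta>) / (m \<beta> - t)))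
      \<longlongrightarrow> D) F"
    using tendsto_add[OF U tendsto_mult[OF w tendsto_diff[OF V U]]] by simp
  moreover have "\<forall>\<^sub>F \<beta> in F. u (m \<beta>) / (m \<beta> - t) + w \<beta> * (v (m \<beta>) / (m \<beta> - t) - u (m \<beta>) / (m \<beta> - t)) = 0"
  proof -
    have "\<forall>\<^sub>F s in nhds t. mix f g \<gamma> differentiable at s \<and> mix f g \<beta>' differentiable at s \<and> s \<in> {0<..<1}"
      by (intro eventually_conj D(1) D'(1) eventually_nhds_in_open) (use t in auto)
    from eventually_compose_filterlim[OF this m_lim] F(4) m_ne
    have "\<forall>\<^sub>F \<beta> in F. \<beta> \<in> {0..1} \<and> m \<beta> \<noteq> t \<and> mix f g \<gamma> differentiable at (m \<beta>)
        \<and> mix f g \<beta>' differentiable at (m \<beta>) \<and> m \<beta> \<in> {0<..<1}"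
      by eventually_elim auto
    then show ?thesis
    proof eventually_elim
      case (elim \<beta>)
      have "u (m \<beta>) + w \<beta> * (v (m \<beta>) - u (m \<beta>)) = 0"
        unfolding w_def
      proof (rule first_order_condition_reparametrized)
        show "(mix f g \<gamma> has_real_derivative u (m \<beta>)) (at (m \<beta>))"
          "(mix f g \<beta>' has_real_derivative v (m \<beta>)) (at (m \<beta>))"
          using u v elim by blast+
      qed (use elim \<beta>'(2) in auto)
      then show ?case by (simp add: diff_divide_distrib[symmetric] add_divide_distrib[symmetric])
    qed
  qed
  ultimately have "((\<lambda>\<beta>. 0) \<longlongrightarrow> D) F"
    by (rule Lim_transform_eventually)
  then have "D = 0" using tendsto_unique[OF F(1) _ tendsto_const] by blast
  then show False using D(3) by simp
qed

lemma minimizer_strict_mono_at_interior: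
  assumes "m 0 < m 1" and \<beta>: "\<beta>1 \<in> {0..1}" "\<beta>2 \<in> {0..1}" "\<beta>1 < \<beta>2" and t: "m \<beta>1 \<in> {0<..<1}"
  shows "m \<beta>1 < m \<beta>2"
proof (rule ccontr)
  assume "\<not> m \<beta>1 < m \<beta>2"
  then have eq: "m \<beta>2 = m \<beta>1"
    using mono_onD[OF mono_on_minimizer[OF assms(1)] \<beta>(1,2)] \<beta>(3) by simp
  define Z where "Z = {\<beta> \<in> {0..1}. m \<beta> = m \<beta>1}"
  have "closedin (top_of_set {0..1}) Z"
    unfolding Z_def by (rule continuous_closedin_preimage_constant[OF continuous_on_minimizer])
  moreover have "\<beta>1 \<in> Z" "\<beta>2 \<in> Z" using \<beta> eq by (auto simp: Z_def)
  moreover have "Z \<noteq> {0..1}"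
  proof
    assume "Z = {0..1}"
    then have "0 \<in> Z" "1 \<in> Z" by auto
    then show False using assms(1) by (simp add: Z_def)
  qed
  ultimately have "\<not> openin (top_of_set {0..1}) Z"
    using connected_clopen[of "{0..1::real}"] by auto
  moreover have "Z \<subseteq> {0..1}" by (auto simp: Z_def)
  ultimately obtain \<gamma> where \<gamma>: "\<gamma> \<in> Z" and "\<forall>e>0. \<exists>\<beta>\<in>{0..1}. dist \<beta> \<gamma> < e \<and> \<beta> \<notin> Z"
    unfolding openin_euclidean_subtopology_iff by blast
  then have "\<gamma> islimpt ({0..1} - Z)" unfolding islimpt_approachable by fastforce
  moreover obtain \<beta>' where "\<beta>' \<in> Z" "\<beta>' \<noteq> \<gamma>"
    using \<open>\<beta>1 \<in> Z\<close> \<open>\<beta>2 \<in> Z\<close> \<beta>(3) by (cases "\<gamma> = \<beta>1") auto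
  moreover have "(m \<longlongrightarrow> m \<gamma>) (at \<gamma> within {0..1} - Z)"
    using continuous_on_minimizer \<gamma> unfolding continuous_on_def Z_def
    by (blast intro: tendsto_within_subset)
  ultimately show False
    using level_set_not_approached[of \<gamma> "m \<beta>1" \<beta>' "at \<gamma> within {0..1} - Z"] \<gamma> t
    by (auto simp: Z_def trivial_limit_within filterlim_at eventually_at_filter)
qed

end

lemma prob_space_Qm:
  assumes "is_density nu f"
  shows "prob_space (Qm nu f)"
proof
  show "emeasure (Qm nu f) (space (Qm nu f)) = 1"
    using assms by (simp add: Qm_def is_density_def emeasure_density)
qed

lemma integral_Qm:
  assumes "is_density nu f" "h \<in> borel_measurable nu"
  shows "(\<integral>y. h y \<partial>Qm nu f) = (\<integral>y. h y * f y \<partial>nu)"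
  using assms integral_density[of h nu f] by (simp add: Qm_def is_density_def mult.commute)

lemma continuous_on_KL_term:
  assumes "assumptions_1_2 Y nu q qt"
  shows "continuous_on {0..1} (\<lambda>th. \<integral>y. ln (q x y / qt th x y) * q x y \<partial>nu)"
proof -
  define Q where "Q = Qm nu (q x)"
  define L where "L th y = ln (q x y / qt th x y)" for th y
  have dens: "is_density nu (q x)" "\<And>th. th \<in> {0..1} \<Longrightarrow> is_density nu (qt th x)"
    using assms by (auto simp: assumptions_1_2_def)
  interpret Q: prob_space Q unfolding Q_def by (rule prob_space_Qm[OF dens(1)])
  have sets_Q: "sets Q = sets nu" by (simp add: Q_def Qm_def)
  have L_nu: "L th \<in> borel_measurable nu" if "th \<in> {0..1}" for th
  proof -
    have [measurable]: "q x \<in> borel_measurable nu" "qt th x \<in> borel_measurable nu"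
      using dens(1) dens(2)[OF that] by (simp_all add: is_density_def)
    show ?thesis unfolding L_def by measurable
  qed
  then have L_Q: "L th \<in> borel_measurable Q" if "th \<in> {0..1}" for th
    using measurable_cong_sets[OF sets_Q refl] that by blast
  obtain w where "w \<in> borel_measurable nu" "integrable Q (\<lambda>y. (w y)\<^sup>2)"
    and dom: "AE y in Q. \<forall>th\<in>{0..1}. 0 < qt th x y \<and> \<bar>L th y\<bar> \<le> w y"
    using assms unfolding assumptions_1_2_def Q_def L_def by blast
  then have "integrable Q w"
    using measurable_cong_sets[OF sets_Q refl] by (blast intro: Q.square_integrable_imp_integrable)
  have cont: "AE y in Q. continuous_on {0..1} (\<lambda>th. qt th x y)"
    using assms unfolding assumptions_1_2_def Q_def by blast
  have "continuous_on {0..1} (\<lambda>th. \<integral>y. L th y \<partial>Q)"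
  proof (rule continuous_on_sequentiallyI)
    fix u :: "nat \<Rightarrow> real" and a
    assume u: "\<forall>n. u n \<in> {0..1}" and a: "a \<in> {0..1}" and "u \<longlonglongrightarrow> a"
    show "(\<lambda>n. \<integral>y. L (u n) y \<partial>Q) \<longlonglongrightarrow> (\<integral>y. L a y \<partial>Q)"
    proof (rule integral_dominated_convergence[where w=w])
      show "AE y in Q. (\<lambda>n. L (u n) y) \<longlonglongrightarrow> L a y"
        using dom cont
      proof eventually_elim
        case (elim y)
        have "(\<lambda>n. qt (u n) x y) \<longlonglongrightarrow> qt a x y"
          using continuous_on_tendsto_compose[OF elim(2) \<open>u \<longlonglongrightarrow> a\<close> a] u by auto
        moreover have "0 < qt a x y" using elim(1) a by auto
        ultimately show ?case
          unfolding L_def by (cases "q x y = 0") (auto intro!: tendsto_ln tendsto_divide)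
      qed
      show "\<And>n. AE y in Q. norm (L (u n) y) \<le> w y"
        using dom u by auto
    qed (use L_Q u a \<open>integrable Q w\<close> in auto)
  qed
  moreover have "(\<integral>y. L th y \<partial>Q) = (\<integral>y. ln (q x y / qt th x y) * q x y \<partial>nu)" if "th \<in> {0..1}" for th
    using integral_Qm[OF dens(1) L_nu[OF that]] by (simp add: Q_def L_def)
  ultimately show ?thesis by (rule continuous_on_eq)
qed

lemma continuous_on_KLD:
  assumes "assumptions_1_2 Y nu q qt"
  shows "continuous_on {0..1} (\<lambda>th. KLD nu q qt th \<sigma>)"
  unfolding KLD_def by (intro continuous_intros continuous_on_KL_term[OF assms])

lemma mixture_in_DeltaX:
  assumes "\<sigma> \<in> DeltaX" "\<sigma>' \<in> DeltaX" "\<beta> \<in> {0..1}"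
  shows "(\<lambda>x. \<beta> * \<sigma> x + (1 - \<beta>) * \<sigma>' x) \<in> DeltaX"
  using assms by (auto simp: DeltaX_def sum.distrib sum_distrib_left[symmetric])

lemma KLD_mixture:
  "KLD nu q qt th (\<lambda>x. \<beta> * \<sigma> x + (1 - \<beta>) * \<sigma>' x)
     = \<beta> * KLD nu q qt th \<sigma> + (1 - \<beta>) * KLD nu q qt th \<sigma>'"
  unfolding KLD_def by (simp add: distrib_right sum.distrib sum_distrib_left mult.assoc)

lemma mixture_minimizer_theta_of:
  assumes A12: "assumptions_1_2 Y nu q qt" and A5: "assumption_5 nu q qt"
    and \<sigma>: "\<sigma> \<in> DeltaX" "\<sigma>' \<in> DeltaX"
  shows "mixture_minimizer (\<lambda>s. KLD nu q qt s \<sigma>) (\<lambda>s. KLD nu q qt s \<sigma>')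
           (\<lambda>\<beta>. theta_of nu q qt (\<lambda>x. \<beta> * \<sigma> x + (1 - \<beta>) * \<sigma>' x))"
    (is "mixture_minimizer ?f ?g ?m")
proof -
  define \<sigma>\<^sub>b where "\<sigma>\<^sub>b \<beta> = (\<lambda>x. \<beta> * \<sigma> x + (1 - \<beta>) * \<sigma>' x)" for \<beta> :: real
  have K: "(\<lambda>s. KLD nu q qt s (\<sigma>\<^sub>b \<beta>)) = mix ?f ?g \<beta>" for \<beta>
    by (simp add: \<sigma>\<^sub>b_def KLD_mixture mix_def[abs_def])
  have \<sigma>\<^sub>b: "\<sigma>\<^sub>b \<beta> \<in> DeltaX" if "\<beta> \<in> {0..1}" for \<beta>
    unfolding \<sigma>\<^sub>b_def using mixture_in_DeltaX[OF \<sigma> that] .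
  have unique: "\<exists>!t. is_KLD_min nu q qt (\<sigma>\<^sub>b \<beta>) t" if "\<beta> \<in> {0..1}" for \<beta>
    using A5 \<sigma>\<^sub>b[OF that] by (auto simp: assumption_5_def)
  have min: "is_KLD_min nu q qt (\<sigma>\<^sub>b \<beta>) (?m \<beta>)" if "\<beta> \<in> {0..1}" for \<beta>
    using theI'[OF unique[OF that]] by (simp add: theta_of_def \<sigma>\<^sub>b_def)
  show ?thesis
  proof
    fix \<beta> s t :: real assume \<beta>: "\<beta> \<in> {0..1}"
    show "?m \<beta> \<in> {0..1}" using min[OF \<beta>] by (simp add: is_KLD_min_def)
    show "s \<in> {0..1} \<Longrightarrow> mix ?f ?g \<beta> (?m \<beta>) \<le> mix ?f ?g \<beta> s"
      using min[OF \<beta>] unfolding is_KLD_min_def K[symmetric] \<sigma>\<^sub>b_def by blast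
    show "t \<in> {0..1} \<Longrightarrow> \<forall>s\<in>{0..1}. mix ?f ?g \<beta> t \<le> mix ?f ?g \<beta> s \<Longrightarrow> t = ?m \<beta>"
      using min[OF \<beta>] unique[OF \<beta>] unfolding is_KLD_min_def K[symmetric] \<sigma>\<^sub>b_def by blast
    show "?m \<beta> \<in> {0<..<1} \<Longrightarrow> \<exists>D. (\<forall>\<^sub>F t in nhds (?m \<beta>). mix ?f ?g \<beta> differentiable at t)
        \<and> (deriv (mix ?f ?g \<beta>) has_real_derivative D) (at (?m \<beta>)) \<and> D > 0"
      using A5 \<sigma>\<^sub>b[OF \<beta>] unfolding assumption_5_def K[symmetric] \<sigma>\<^sub>b_def by blast
  qed (use continuous_on_KLD[OF A12] in auto)
qed

theorem proposition5:
  fixes Y :: "'y::euclidean_space set" and nu :: "'y measure"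
    and q :: "'x::finite \<Rightarrow> 'y \<Rightarrow> real" and qt :: "real \<Rightarrow> 'x \<Rightarrow> 'y \<Rightarrow> real"
    and \<sigma> \<sigma>' :: "'x \<Rightarrow> real"
  assumes A12: "assumptions_1_2 Y nu q qt"
    and A5: "assumption_5 nu q qt"
    and s: "\<sigma> \<in> DeltaX" and s': "\<sigma>' \<in> DeltaX"
  defines "\<theta> \<equiv> theta_of nu q qt"
    and "\<sigma>\<^sub>b \<equiv> (\<lambda>\<beta>::real. \<lambda>x. \<beta> * \<sigma> x + (1 - \<beta>) * \<sigma>' x)"
  shows "(\<theta> \<sigma> = \<theta> \<sigma>' \<longrightarrow> (\<forall>\<beta>\<in>{0..1}. \<theta> (\<sigma>\<^sub>b \<beta>) = \<theta> \<sigma>))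
       \<and> (\<theta> \<sigma>' < \<theta> \<sigma> \<longrightarrow> mono_on {0..1} (\<lambda>\<beta>. \<theta> (\<sigma>\<^sub>b \<beta>)))
       \<and> (\<theta> \<sigma>' < \<theta> \<sigma> \<longrightarrow> (\<forall>\<beta>1\<in>{0..1}. \<forall>\<beta>2\<in>{0..1}. \<beta>1 < \<beta>2 \<longrightarrow>
             \<theta> (\<sigma>\<^sub>b \<beta>1) \<in> {0<..<1} \<longrightarrow> \<theta> (\<sigma>\<^sub>b \<beta>1) < \<theta> (\<sigma>\<^sub>b \<beta>2)))"
proof -
  interpret mixture_minimizer "\<lambda>s. KLD nu q qt s \<sigma>" "\<lambda>s. KLD nu q qt s \<sigma>'" "\<lambda>\<beta>. \<theta> (\<sigma>\<^sub>b \<beta>)"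
    unfolding \<theta>_def \<sigma>\<^sub>b_def by (rule mixture_minimizer_theta_of[OF A12 A5 s s'])
  have endpoints: "\<theta> \<sigma> = \<theta> (\<sigma>\<^sub>b 1)" "\<theta> \<sigma>' = \<theta> (\<sigma>\<^sub>b 0)" by (simp_all add: \<sigma>\<^sub>b_def)
  show ?thesis
    unfolding endpoints
  proof (intro conjI impI ballI)
    fix \<beta> :: real assume "\<theta> (\<sigma>\<^sub>b 1) = \<theta> (\<sigma>\<^sub>b 0)" "\<beta> \<in> {0..1}"
    then show "\<theta> (\<sigma>\<^sub>b \<beta>) = \<theta> (\<sigma>\<^sub>b 1)" using minimizer_constant_between[of 0 1 \<beta>] by simp
  next
    assume "\<theta> (\<sigma>\<^sub>b 0) < \<theta> (\<sigma>\<^sub>b 1)"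
    then show "mono_on {0..1} (\<lambda>\<beta>. \<theta> (\<sigma>\<^sub>b \<beta>))" by (rule mono_on_minimizer)
  next
    fix \<beta>1 \<beta>2 :: real
    assume "\<theta> (\<sigma>\<^sub>b 0) < \<theta> (\<sigma>\<^sub>b 1)" "\<beta>1 \<in> {0..1}" "\<beta>2 \<in> {0..1}" "\<beta>1 < \<beta>2"
      "\<theta> (\<sigma>\<^sub>b \<beta>1) \<in> {0<..<1}"
    then show "\<theta> (\<sigma>\<^sub>b \<beta>1) < \<theta> (\<sigma>\<^sub>b \<beta>2)"
      by (rule minimizer_strict_mono_at_interior)
  qed
qed

end
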